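(* Let $X$ be a locally connected compact metrizable group, let $T$ be a minimal rotation of $X$, let $G$ be a locally compact second countable group, $f\colon X\to G$ continuous, $H$ a closed subgroup of $G$, and let $y\mapsto H_y$ be a consistent selection of subgroups in the essential ranges of $f$. Let $U\subseteq G$ be open and $C\subseteq G$ compact. Then for every fixed integer $n$ the sets $\{y\in X: f(n,y)H_y\cap UH_y\neq\varnothing\}$ and $\{y\in X: f(n,y)H_y\cap CH_y=\varnothing\}$ are open in $X$.
   Context: The cocycle is $f(n,x)=f(T^{n-1}x)\cdots f(x)$ for $n\ge1$, $f(0,x)=\mathbf 1_G$, $f(n,x)=f(-n,T^nx)^{-1}$ for $n<0$. $E_x(f)$ is the set of $g\in G$ such that for every open neighbourhood $V$ of $g$ and every open neighbourhood $\mathcal O$ of $x$ there is $m\neq0$ with $T^{-m}\mathcal O\cap\mathcal O\cap\{y:f(m,y)\in V\}\neq\varnothing$. $H^G=\{gHg^{-1}:g\in G\}$, topologised via the bijection with $G/N(H)$, $N(H)=\{g:gHg^{-1}=H\}$. A consistent selection of subgroups in the essential ranges of $f$ is a continuous map $y\mapsto H_y$ from $X$ into $H^G$ such that $H_x\subseteq E_x(f)$ and $H_{T^mx}=f(m,x)H_xf(m,x)^{-1}$ for all $x\in X$, $m\in\mathbb Z$. *)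

theory Defs
  imports "HOL-Analysis.Analysis"
begin

(* Groups are written additively (Isabelle's group_add is NOT assumed commutative). *)

definition is_subgroup :: "'g::group_add set \<Rightarrow> bool" where
  "is_subgroup H \<longleftrightarrow> 0 \<in> H \<and> (\<forall>a\<in>H. \<forall>b\<in>H. a + b \<in> H) \<and> (\<forall>a\<in>H. - a \<in> H)"

definition conj_set :: "'g::group_add \<Rightarrow> 'g set \<Rightarrow> 'g set" where
  "conj_set g H = (\<lambda>h. g + h + - g) ` H"

definition conjugates :: "'g::group_add set \<Rightarrow> 'g set set" where
  "conjugates H = {conj_set g H | g. True}"

(* open sets of H^G, topologised via the bijection with G/N(H): a set S of conjugates is open
   iff its preimage under g \<mapsto> gHg^{-1} is open in G (quotient topology) *)
definition conj_open :: "'g::{group_add,topological_space} set \<Rightarrow> 'g set set \<Rightarrow> bool" where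
  "conj_open H S \<longleftrightarrow> S \<subseteq> conjugates H \<and> open {g. conj_set g H \<in> S}"

definition is_rotation :: "('x::group_add \<Rightarrow> 'x) \<Rightarrow> bool" where
  "is_rotation T \<longleftrightarrow> (\<exists>a. \<forall>x. T x = a + x)"

definition Tpow :: "('x \<Rightarrow> 'x) \<Rightarrow> int \<Rightarrow> 'x \<Rightarrow> 'x" where
  "Tpow T n = (if 0 \<le> n then T ^^ nat n else inv T ^^ nat (- n))"

definition minimal_map :: "('x::topological_space \<Rightarrow> 'x) \<Rightarrow> bool" where
  "minimal_map T \<longleftrightarrow> (\<forall>x. closure {Tpow T n x | n. True} = UNIV)"

fun cocycle_nat :: "('x \<Rightarrow> 'g::group_add) \<Rightarrow> ('x \<Rightarrow> 'x) \<Rightarrow> nat \<Rightarrow> 'x \<Rightarrow> 'g" where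
  "cocycle_nat f T 0 x = 0"
| "cocycle_nat f T (Suc n) x = f ((T ^^ n) x) + cocycle_nat f T n x"

definition cocycle :: "('x \<Rightarrow> 'g::group_add) \<Rightarrow> ('x \<Rightarrow> 'x) \<Rightarrow> int \<Rightarrow> 'x \<Rightarrow> 'g" where
  "cocycle f T n x = (if 0 \<le> n then cocycle_nat f T (nat n) x
                      else - cocycle_nat f T (nat (- n)) (Tpow T n x))"

definition ess_range ::
  "('x::topological_space \<Rightarrow> 'g::{group_add,topological_space}) \<Rightarrow> ('x \<Rightarrow> 'x) \<Rightarrow> 'x \<Rightarrow> 'g set" where
  "ess_range f T x = {g. \<forall>V W. open V \<longrightarrow> g \<in> V \<longrightarrow> open W \<longrightarrow> x \<in> W \<longrightarrow>
      (\<exists>m::int. m \<noteq> 0 \<and> (\<exists>y. Tpow T m y \<in> W \<and> y \<in> W \<and> cocycle f T m y \<in> V))}"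

definition consistent_selection ::
  "('x::topological_space \<Rightarrow> 'g::{group_add,topological_space}) \<Rightarrow> ('x \<Rightarrow> 'x) \<Rightarrow> 'g set
     \<Rightarrow> ('x \<Rightarrow> 'g set) \<Rightarrow> bool" where
  "consistent_selection f T H Hs \<longleftrightarrow>
     (\<forall>y. Hs y \<in> conjugates H) \<and>
     (\<forall>S. conj_open H S \<longrightarrow> open {y. Hs y \<in> S}) \<and>
     (\<forall>x. Hs x \<subseteq> ess_range f T x) \<and>
     (\<forall>x m. Hs (Tpow T m x) = conj_set (cocycle f T m x) (Hs x))"

end

theory Submission
  imports Defs
begin

text \<open>Both conditions on \<open>y\<close> depend only on the pair \<open>(f(n,y), H\<^sub>y)\<close>. Writing
  \<open>H\<^sub>y = g H g\<^sup>-\<^sup>1\<close>, they become conditions on \<open>(f(n,y), g) \<in> G \<times> G\<close> that define open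
  subsets of \<open>G \<times> G\<close>: the first because \<open>U\<close> is open, the second by the tube lemma, since \<open>C\<close> is
  compact and \<open>H\<close> is closed. As \<open>f(n,\<cdot>)\<close> is continuous (\<open>T\<close> is a translation) and \<open>y \<mapsto> H\<^sub>y\<close>
  is continuous for the quotient topology on \<open>H\<^sup>G\<close>, openness pulls back to \<open>X\<close>.\<close>

lemma conj_set_add: "conj_set (a + b) H = conj_set a (conj_set (b::'g::group_add) H)"
  unfolding conj_set_def image_image by (simp only: add.assoc minus_add)

lemma conj_set_zero [simp]: "conj_set (0::'g::group_add) H = H"
  unfolding conj_set_def by simp

lemma mem_conj_set_iff: "z \<in> conj_set g H \<longleftrightarrow> - g + z + g \<in> (H::'g::group_add set)"
proof
  assume "z \<in> conj_set g H"
  then obtain h where "h \<in> H" "z = g + h + - g" unfolding conj_set_def by auto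
  then show "- g + z + g \<in> H" by (simp add: add.assoc)
next
  assume "- g + z + g \<in> H"
  moreover have "z = g + (- g + z + g) + - g" by (simp add: add.assoc)
  ultimately show "z \<in> conj_set g H" unfolding conj_set_def by blast
qed

lemma is_subgroup_conj_set:
  assumes "is_subgroup (H::'g::group_add set)"
  shows "is_subgroup (conj_set g H)"
  unfolding is_subgroup_def
proof (intro conjI ballI)
  show "0 \<in> conj_set g H"
    using assms unfolding mem_conj_set_iff is_subgroup_def by simp
next
  fix a b assume "a \<in> conj_set g H" "b \<in> conj_set g H"
  moreover have "- g + (a + b) + g = (- g + a + g) + (- g + b + g)" by (simp add: add.assoc)
  ultimately show "a + b \<in> conj_set g H"
    using assms unfolding mem_conj_set_iff is_subgroup_def by metis
next
  fix a assume "a \<in> conj_set g H"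
  moreover have "- g + - a + g = - (- g + a + g)" by (simp add: add.assoc minus_add)
  ultimately show "- a \<in> conj_set g H"
    using assms unfolding mem_conj_set_iff is_subgroup_def by metis
qed

lemma coset_meets_set_iff:
  assumes "is_subgroup (K::'g::group_add set)"
  shows "(\<lambda>h. c + h) ` K \<inter> {u + h | u h. u \<in> U \<and> h \<in> K} \<noteq> {} \<longleftrightarrow> (\<exists>k\<in>K. c - k \<in> U)"
proof
  assume "(\<lambda>h. c + h) ` K \<inter> {u + h | u h. u \<in> U \<and> h \<in> K} \<noteq> {}"
  then obtain k1 u k2 where k: "k1 \<in> K" "u \<in> U" "k2 \<in> K" "c + k1 = u + k2" by blast
  have "k2 + - k1 \<in> K" using k assms unfolding is_subgroup_def by blast
  moreover have "c - (k2 + - k1) = u"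
  proof -
    have "c - (k2 + - k1) = (c + k1) + - k2"
      by (simp add: minus_add add.assoc diff_conv_add_uminus del: add_uminus_conv_diff)
    also have "\<dots> = u" using k(4) by (simp add: add.assoc)
    finally show ?thesis .
  qed
  ultimately show "\<exists>k\<in>K. c - k \<in> U" using k(2) by metis
next
  assume "\<exists>k\<in>K. c - k \<in> U"
  then obtain k where "k \<in> K" "c - k \<in> U" by blast
  moreover have "0 \<in> K" using assms unfolding is_subgroup_def by blast
  moreover have "c + 0 = (c - k) + k" by simp
  ultimately show "(\<lambda>h. c + h) ` K \<inter> {u + h | u h. u \<in> U \<and> h \<in> K} \<noteq> {}" by blast
qed

lemma coset_disjoint_set_iff:
  assumes "is_subgroup (K::'g::group_add set)"
  shows "(\<lambda>h. c + h) ` K \<inter> {x + h | x h. x \<in> C \<and> h \<in> K} = {} \<longleftrightarrow> (\<forall>x\<in>C. - x + c \<notin> K)"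
proof
  assume disj: "(\<lambda>h. c + h) ` K \<inter> {x + h | x h. x \<in> C \<and> h \<in> K} = {}"
  show "\<forall>x\<in>C. - x + c \<notin> K"
  proof (intro ballI notI)
    fix x assume "x \<in> C" "- x + c \<in> K"
    moreover have "0 \<in> K" using assms unfolding is_subgroup_def by blast
    moreover have "c + 0 = x + (- x + c)" by (simp add: add.assoc[symmetric])
    ultimately show False using disj by blast
  qed
next
  assume avoid: "\<forall>x\<in>C. - x + c \<notin> K"
  show "(\<lambda>h. c + h) ` K \<inter> {x + h | x h. x \<in> C \<and> h \<in> K} = {}"
  proof (rule ccontr)
    assume "(\<lambda>h. c + h) ` K \<inter> {x + h | x h. x \<in> C \<and> h \<in> K} \<noteq> {}"
    then obtain k1 x k2 where k: "k1 \<in> K" "x \<in> C" "k2 \<in> K" "c + k1 = x + k2" by blast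
    have "k2 + - k1 \<in> K" using k assms unfolding is_subgroup_def by blast
    moreover have "- x + c = k2 + - k1"
    proof -
      have "- x + c = - x + (c + k1) + - k1" by (simp only: add.assoc add.right_inverse add_0_right)
      also have "\<dots> = k2 + - k1" using k(4) by (simp add: add.assoc[symmetric])
      finally show ?thesis .
    qed
    ultimately show False using avoid k(2) by metis
  qed
qed

lemma conj_open_conj_set_image:
  fixes V :: "'g::topological_group_add set"
  assumes "open V"
  shows "conj_open H {conj_set g H | g. g \<in> V}"
proof -
  let ?N = "{n. conj_set n H = H}"
  have "{g. conj_set g H \<in> {conj_set g H | g. g \<in> V}} = (\<Union>n\<in>?N. (\<lambda>x. x + n) -` V)"
  proof (intro equalityI subsetI)
    fix g assume "g \<in> {g. conj_set g H \<in> {conj_set g H | g. g \<in> V}}"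
    then obtain g' where g': "g' \<in> V" "conj_set g H = conj_set g' H" by auto
    have "conj_set (- g + g') H = conj_set (- g + g) H"
      by (simp only: conj_set_add g'(2))
    then have "- g + g' \<in> ?N" by simp
    moreover have "g + (- g + g') \<in> V" using g'(1) by (simp add: add.assoc[symmetric])
    ultimately show "g \<in> (\<Union>n\<in>?N. (\<lambda>x. x + n) -` V)" by blast
  next
    fix g assume "g \<in> (\<Union>n\<in>?N. (\<lambda>x. x + n) -` V)"
    then obtain n where "conj_set n H = H" "g + n \<in> V" by blast
    then have "conj_set g H = conj_set (g + n) H \<and> g + n \<in> V" by (simp add: conj_set_add)
    then show "g \<in> {g. conj_set g H \<in> {conj_set g H | g. g \<in> V}}" by blast
  qed
  moreover have "open ((\<lambda>x. x + n) -` V)" for n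
    using assms by (intro open_vimage continuous_intros)
  ultimately have "open {g. conj_set g H \<in> {conj_set g H | g. g \<in> V}}"
    by (simp add: open_UN)
  moreover have "{conj_set g H | g. g \<in> V} \<subseteq> conjugates H"
    unfolding conjugates_def by blast
  ultimately show ?thesis
    unfolding conj_open_def by blast
qed

lemma open_Collect_selection:
  fixes c :: "'x::topological_space \<Rightarrow> 'g::topological_group_add" and H :: "'g set"
  assumes c: "continuous_on UNIV c"
    and conjugate: "\<forall>y. Hs y \<in> conjugates H"
    and continuous: "\<forall>S. conj_open H S \<longrightarrow> open {y. Hs y \<in> S}"
    and "open {(a, g). Q a (conj_set g H)}"
  shows "open {y. Q (c y) (Hs y)}"
proof (subst open_subopen, intro ballI)
  let ?P = "{(a, g). Q a (conj_set g H)}"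
  fix y0 assume "y0 \<in> {y. Q (c y) (Hs y)}"
  moreover obtain g0 where g0: "Hs y0 = conj_set g0 H"
    using conjugate unfolding conjugates_def by auto
  ultimately have "(c y0, g0) \<in> ?P" by simp
  from open_prod_elim[OF \<open>open ?P\<close> this]
  obtain A B where AB: "open A" "open B" "(c y0, g0) \<in> A \<times> B" "A \<times> B \<subseteq> ?P" .
  let ?W = "c -` A \<inter> {y. Hs y \<in> {conj_set g H | g. g \<in> B}}"
  have "open ?W"
    using continuous[rule_format, OF conj_open_conj_set_image[OF AB(2)]] open_vimage[OF AB(1) c]
    by (rule open_Int[rotated])
  moreover have "y0 \<in> ?W" using AB(3) g0 by auto
  moreover have "?W \<subseteq> {y. Q (c y) (Hs y)}"
  proof
    fix y assume "y \<in> ?W"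
    then obtain g where "(c y, g) \<in> A \<times> B" and Hs: "Hs y = conj_set g H" by auto
    then have "(c y, g) \<in> ?P" using AB(4) by blast
    then show "y \<in> {y. Q (c y) (Hs y)}" using Hs by simp
  qed
  ultimately show "\<exists>W. open W \<and> y0 \<in> W \<and> W \<subseteq> {y. Q (c y) (Hs y)}" by blast
qed

lemma open_Collect_coset_meets:
  fixes H U :: "'g::topological_group_add set"
  assumes "is_subgroup H" "open U"
  shows "open {(a, g). (\<lambda>h. a + h) ` conj_set g H \<inter>
    {u + h | u h. u \<in> U \<and> h \<in> conj_set g H} \<noteq> {}}"
proof -
  have "{(a, g). (\<lambda>h. a + h) ` conj_set g H \<inter> {u + h | u h. u \<in> U \<and> h \<in> conj_set g H} \<noteq> {}}
      = (\<Union>h\<in>H. (\<lambda>(a, g). a - (g + h - g)) -` U)"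
    using coset_meets_set_iff[OF is_subgroup_conj_set[OF assms(1)]]
    by (auto simp: conj_set_def)
  moreover have "open (\<Union>h\<in>H. (\<lambda>(a, g). a - (g + h - g)) -` U)"
    using assms(2) by (intro open_UN ballI open_vimage)
      (auto simp: case_prod_unfold intro!: continuous_intros)
  ultimately show ?thesis by simp
qed

lemma open_Collect_ball_compact:
  fixes F :: "'a::topological_space \<times> 'b::topological_space \<Rightarrow> 'c::topological_space"
  assumes "continuous_on UNIV F" "open S" "compact C"
  shows "open {p. \<forall>x\<in>C. F (p, x) \<in> S}"
proof (subst open_subopen, intro ballI)
  fix p assume "p \<in> {p. \<forall>x\<in>C. F (p, x) \<in> S}"
  then have "{p} \<times> C \<subseteq> F -` S" by auto
  then obtain W where "p \<in> W" "open W" "W \<times> C \<subseteq> F -` S"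
    using Elementary_Topology.tube_lemma[OF \<open>compact C\<close> open_vimage[OF assms(2,1)]] by blast
  then show "\<exists>W. open W \<and> p \<in> W \<and> W \<subseteq> {p. \<forall>x\<in>C. F (p, x) \<in> S}" by blast
qed

lemma open_Collect_coset_disjoint:
  fixes H C :: "'g::topological_group_add set"
  assumes "is_subgroup H" "closed H" "compact C"
  shows "open {(a, g). (\<lambda>h. a + h) ` conj_set g H \<inter>
    {c + h | c h. c \<in> C \<and> h \<in> conj_set g H} = {}}"
proof -
  have "{(a, g). (\<lambda>h. a + h) ` conj_set g H \<inter> {c + h | c h. c \<in> C \<and> h \<in> conj_set g H} = {}}
      = {p. \<forall>x\<in>C. (\<lambda>((a, g), x). - g + (- x + a) + g) (p, x) \<in> - H}"
    using coset_disjoint_set_iff[OF is_subgroup_conj_set[OF assms(1)]]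
    by (auto simp: mem_conj_set_iff)
  moreover have "open {p. \<forall>x\<in>C. (\<lambda>((a, g), x). - g + (- x + a) + g) (p, x) \<in> - H}"
    using assms(2,3) by (intro open_Collect_ball_compact)
      (auto simp: case_prod_unfold intro!: continuous_intros)
  ultimately show ?thesis by simp
qed

lemma continuous_on_funpow:
  fixes g :: "'a::topological_space \<Rightarrow> 'a"
  assumes "continuous_on UNIV g"
  shows "continuous_on UNIV (g ^^ k)"
proof (induction k)
  case (Suc k)
  have "continuous_on UNIV (\<lambda>x. g ((g ^^ k) x))"
    using continuous_on_compose2[of UNIV g UNIV "g ^^ k"] assms Suc.IH by simp
  then show ?case by (simp add: o_def)
qed (simp add: continuous_on_id)

lemma continuous_on_cocycle_nat:
  fixes f :: "'x::topological_space \<Rightarrow> 'g::topological_group_add"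
  assumes "continuous_on UNIV f" "continuous_on UNIV T"
  shows "continuous_on UNIV (cocycle_nat f T m)"
proof (induction m)
  case (Suc m)
  have "continuous_on UNIV (\<lambda>x. f ((T ^^ m) x))"
    using continuous_on_compose2[OF assms(1) continuous_on_funpow[OF assms(2)]] by simp
  with Suc show ?case by (simp add: continuous_on_add)
qed (simp add: continuous_on_const)

lemma inv_translation:
  assumes "\<And>x. T x = a + (x::'x::group_add)"
  shows "inv T = (\<lambda>x. - a + x)"
proof
  fix y
  have "inj T" using assms by (simp add: inj_def)
  moreover have "T (- a + y) = y" using assms by (simp add: add.assoc[symmetric])
  ultimately show "inv T y = - a + y" by (rule inv_f_eq)
qed

lemma continuous_on_Tpow_rotation:
  fixes T :: "'x::topological_group_add \<Rightarrow> 'x"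
  assumes "is_rotation T"
  shows "continuous_on UNIV (Tpow T n)"
proof -
  obtain a where a: "\<And>x. T x = a + x" using assms unfolding is_rotation_def by blast
  have "continuous_on UNIV (\<lambda>x. a + x)" "continuous_on UNIV (\<lambda>x. - a + x)"
    by (intro continuous_intros)+
  then have "continuous_on UNIV T" "continuous_on UNIV (inv T)"
    unfolding inv_translation[OF a] using a by (simp_all add: fun_eq_iff[symmetric])
  then show ?thesis unfolding Tpow_def by (simp add: continuous_on_funpow)
qed

lemma continuous_on_cocycle:
  fixes T :: "'x::topological_group_add \<Rightarrow> 'x" and f :: "'x \<Rightarrow> 'g::topological_group_add"
  assumes "is_rotation T" "continuous_on UNIV f"
  shows "continuous_on UNIV (cocycle f T n)"
proof -
  have Tpow: "continuous_on UNIV (Tpow T k)" for k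
    using continuous_on_Tpow_rotation[OF assms(1)] .
  have "continuous_on UNIV T"
    using Tpow[of 1] by (simp add: Tpow_def)
  then have cocycle_nat: "continuous_on UNIV (cocycle_nat f T k)" for k
    using continuous_on_cocycle_nat[OF assms(2)] by blast
  have "continuous_on UNIV (\<lambda>x. cocycle_nat f T k (Tpow T n x))" for k
    using continuous_on_compose2[OF cocycle_nat Tpow] by simp
  then have "continuous_on UNIV (\<lambda>x. - cocycle_nat f T k (Tpow T n x))" for k
    by (rule continuous_on_minus)
  with cocycle_nat show ?thesis
    unfolding cocycle_def by (cases "0 \<le> n") simp_all
qed

theorem lemma4p2:
  fixes T :: "'x::{topological_group_add, metric_space} \<Rightarrow> 'x"
    and f :: "'x \<Rightarrow> 'g::{topological_group_add, t2_space, second_countable_topology}"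
    and H :: "'g set" and Hs :: "'x \<Rightarrow> 'g set" and U C :: "'g set"
  assumes "compact (UNIV :: 'x set)"
    and "locally connected (UNIV :: 'x set)"
    and "is_rotation T" and "minimal_map T"
    and "locally_compact_space (euclidean :: 'g topology)"
    and "continuous_on UNIV f"
    and "is_subgroup H" and "closed H"
    and "consistent_selection f T H Hs"
    and "open U" and "compact C"
  shows "\<forall>n::int.
     open {y. ((\<lambda>h. cocycle f T n y + h) ` Hs y) \<inter> {u + h | u h. u \<in> U \<and> h \<in> Hs y} \<noteq> {}} \<and>
     open {y. ((\<lambda>h. cocycle f T n y + h) ` Hs y) \<inter> {c + h | c h. c \<in> C \<and> h \<in> Hs y} = {}}"
proof (intro allI conjI)
  fix n :: int
  have c: "continuous_on UNIV (cocycle f T n)"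
    using continuous_on_cocycle assms(3,6) by blast
  have conjugate: "\<forall>y. Hs y \<in> conjugates H"
    and continuous: "\<forall>S. conj_open H S \<longrightarrow> open {y. Hs y \<in> S}"
    using assms(9) unfolding consistent_selection_def by blast+
  show "open {y. ((\<lambda>h. cocycle f T n y + h) ` Hs y) \<inter>
      {u + h | u h. u \<in> U \<and> h \<in> Hs y} \<noteq> {}}"
    using open_Collect_selection[OF c conjugate continuous
        open_Collect_coset_meets[OF assms(7,10)]] by simp
  show "open {y. ((\<lambda>h. cocycle f T n y + h) ` Hs y) \<inter>
      {c + h | c h. c \<in> C \<and> h \<in> Hs y} = {}}"
    using open_Collect_selection[OF c conjugate continuous
        open_Collect_coset_disjoint[OF assms(7,8,11)]] by simp
qed

end
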